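(* For any distribution $P_{\bar Z\bar Y}$ on $\widehat{\mathcal S}\times\widehat{\mathcal X}$ and any positive integer $M$, there exists a deterministic $(M,d_s,d_x,\epsilon)$ code with \[\epsilon\le\int_0^1\mathbb E\Big[\big(\mathbb P[\pi(X,\bar Z,\bar Y)>t\mid X]\big)^M\Big]\,\mathrm dt,\] where $(X,\bar Z,\bar Y)\sim P_X\times P_{\bar Z\bar Y}$ and $\pi(x,z,y)=\mathbb P[\mathsf d_s(S,z)>d_s\text{ or }\mathsf d_x(x,y)>d_x\mid X=x]$ with $S\sim P_{S|X=x}$.
   Context: Let $\mathcal S,\mathcal X,\widehat{\mathcal S},\widehat{\mathcal X}$ be finite sets, $P_{SX}$ a distribution on $\mathcal S\times\mathcal X$, and $\mathsf d_s:\mathcal S\times\widehat{\mathcal S}\to[0,\infty)$, $\mathsf d_x:\mathcal X\times\widehat{\mathcal X}\to[0,\infty)$ distortion measures; fix $d_s,d_x\ge0$. An $(M,d_s,d_x,\epsilon)$ code is a random encoder $P_{U|X}:\mathcal X\to\{1,\dots,M\}$ and a random decoder $P_{ZY|U}:\{1,\dots,M\}\to\widehat{\mathcal S}\times\widehat{\mathcal X}$ (so $S-X-U-(Z,Y)$) such that $\mathbb P[\mathsf d_s(S,Z)>d_s\text{ or }\mathsf d_x(X,Y)>d_x]\le\epsilon$; it is deterministic if both mappings are deterministic functions. *)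

theory Defs
  imports "HOL-Probability.Probability"
begin

definition marg_X :: "('s \<times> 'x) pmf \<Rightarrow> 'x pmf" where
  "marg_X P = map_pmf snd P"

text \<open>pi(x,z,y) = P[ds(S,z) > Ds or dx(x,y) > Dx | X = x], S ~ P_{S|X=x}.
  Convention: 0 when P_X(x) = 0 (such x carry zero weight).\<close>
definition pi_fn :: "('s \<times> 'x) pmf \<Rightarrow> ('s \<Rightarrow> 'zh \<Rightarrow> real) \<Rightarrow> ('x \<Rightarrow> 'yh \<Rightarrow> real)
    \<Rightarrow> real \<Rightarrow> real \<Rightarrow> 'x \<Rightarrow> 'zh \<Rightarrow> 'yh \<Rightarrow> real" where
  "pi_fn P ds dx Ds Dx x z y =
     measure_pmf.prob P {(s, x'). x' = x \<and> (ds s z > Ds \<or> dx x y > Dx)}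
     / pmf (marg_X P) x"

definition det_code_error :: "('s \<times> 'x) pmf \<Rightarrow> ('s \<Rightarrow> 'zh \<Rightarrow> real) \<Rightarrow> ('x \<Rightarrow> 'yh \<Rightarrow> real)
    \<Rightarrow> real \<Rightarrow> real \<Rightarrow> ('x \<Rightarrow> nat) \<Rightarrow> (nat \<Rightarrow> 'zh \<times> 'yh) \<Rightarrow> real" where
  "det_code_error P ds dx Ds Dx f g =
     measure_pmf.prob P {(s, x). ds s (fst (g (f x))) > Ds \<or> dx x (snd (g (f x))) > Dx}"

definition is_det_code :: "('s \<times> 'x) pmf \<Rightarrow> ('s \<Rightarrow> 'zh \<Rightarrow> real) \<Rightarrow> ('x \<Rightarrow> 'yh \<Rightarrow> real)
    \<Rightarrow> nat \<Rightarrow> real \<Rightarrow> real \<Rightarrow> real \<Rightarrow> ('x \<Rightarrow> nat) \<Rightarrow> (nat \<Rightarrow> 'zh \<times> 'yh) \<Rightarrow> bool" where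
  "is_det_code P ds dx M Ds Dx eps f g \<longleftrightarrow>
     (\<forall>x. f x \<in> {1..M}) \<and> det_code_error P ds dx Ds Dx f g \<le> eps"

end

theory Submission
  imports Defs
begin

text \<open>Random coding. Draw the codebook \<open>c 1, \<dots>, c M\<close> i.i.d. from \<open>Q\<close> and let the
  encoder send \<open>x\<close> to an index minimising \<open>\<pi>(x, c m)\<close>; the resulting excess-distortion
  probability is \<open>E[min\<^sub>m \<pi>(X, c m)]\<close>. For fixed \<open>x\<close> the minimum is a \<open>[0,1]\<close>-valued
  random variable, so its mean is \<open>\<integral>\<^sub>0\<^sup>1 P[min\<^sub>m \<pi>(x, c m) > t] dt\<close>, and by independence
  \<open>P[min\<^sub>m \<pi>(x, c m) > t] = P[\<pi>(x, Z, Y) > t]\<^sup>M\<close>. Some codebook does at least as well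
  as the average over codebooks.\<close>

lemma has_integral_of_bool_less:
  fixes a b v :: real
  assumes "a \<le> v" "v \<le> b"
  shows "((\<lambda>t. of_bool (t < v)) has_integral (v - a)) {a..b}"
proof -
  have "((\<lambda>t. 1) has_integral (v - a)) {a..v}"
    using has_integral_const_real[of "1::real" a v] assms(1) by simp
  then have "((\<lambda>t. of_bool (t < v)) has_integral (v - a)) {a..v}"
    by (rule has_integral_spike_finite[where S="{v}", rotated 2]) auto
  moreover have "((\<lambda>t. of_bool (t < v)) has_integral 0) {v..b}"
    by (rule has_integral_spike_finite[where S="{}", OF _ _ has_integral_0]) auto
  ultimately show ?thesis
    using has_integral_combine[OF assms] by fastforce
qed

lemma expectation_pmf_finite_support:
  fixes f :: "'a \<Rightarrow> real"
  assumes "finite (set_pmf p)"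
  shows "measure_pmf.expectation p f = (\<Sum>x\<in>set_pmf p. pmf p x * f x)"
  using assms by (subst integral_measure_pmf_real[of "set_pmf p"]) (auto simp: mult.commute)

lemma has_integral_expectation_pmf:
  fixes f :: "'a \<Rightarrow> 'b::euclidean_space \<Rightarrow> real"
  assumes "finite (set_pmf p)" "\<And>x. x \<in> set_pmf p \<Longrightarrow> (f x has_integral I x) S"
  shows "((\<lambda>t. measure_pmf.expectation p (\<lambda>x. f x t)) has_integral measure_pmf.expectation p I) S"
proof -
  have "((\<lambda>t. \<Sum>x\<in>set_pmf p. pmf p x * f x t) has_integral (\<Sum>x\<in>set_pmf p. pmf p x * I x)) S"
    using assms by (intro has_integral_sum has_integral_mult_right) auto
  then show ?thesis
    by (simp add: expectation_pmf_finite_support[OF assms(1)])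
qed

lemma has_integral_prob_less_pmf:
  assumes "finite (set_pmf p)" "\<And>c. c \<in> set_pmf p \<Longrightarrow> X c \<in> {0..1}"
  shows "((\<lambda>t. measure_pmf.prob p {c. t < X c}) has_integral measure_pmf.expectation p X) {0..1}"
proof -
  have "((\<lambda>t. measure_pmf.expectation p (\<lambda>c. indicator {c. t < X c} c)) has_integral
          measure_pmf.expectation p X) {0..1}"
    using assms by (intro has_integral_expectation_pmf)
      (auto simp: indicator_def intro: has_integral_of_bool_less[where a = 0, simplified])
  then show ?thesis by simp
qed

lemma expectation_swap_pmf:
  fixes f :: "'a \<Rightarrow> 'b \<Rightarrow> real"
  assumes "finite (set_pmf p)" "finite (set_pmf q)"
  shows "measure_pmf.expectation p (\<lambda>a. measure_pmf.expectation q (f a))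
       = measure_pmf.expectation q (\<lambda>b. measure_pmf.expectation p (\<lambda>a. f a b))"
  using assms by (simp add: expectation_pmf_finite_support sum_distrib_left mult.left_commute sum.swap[of _ "set_pmf p"])

lemma ex_in_set_pmf_le_expectation:
  fixes X :: "'a \<Rightarrow> real"
  assumes "finite (set_pmf p)"
  shows "\<exists>c\<in>set_pmf p. X c \<le> measure_pmf.expectation p X"
proof (rule ccontr)
  assume "\<not> ?thesis"
  then have "(\<Sum>c\<in>set_pmf p. pmf p c * measure_pmf.expectation p X) < (\<Sum>c\<in>set_pmf p. pmf p c * X c)"
    using assms set_pmf_not_empty[of p]
    by (intro sum_strict_mono_ex1) (auto simp: set_pmf_iff not_le ex_in_conv[symmetric])
  then show False
    using assms by (simp add: expectation_pmf_finite_support sum_distrib_right[symmetric] sum_pmf_eq_1)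
qed

lemma prob_Pi_pmf_Min_greater:
  assumes "finite I" "I \<noteq> {}"
  shows "measure_pmf.prob (Pi_pmf I d (\<lambda>_. q)) {c. t < (MIN i\<in>I. f (c i))}
       = measure_pmf.prob q {a. t < f a} ^ card I"
proof -
  have "{c. t < (MIN i\<in>I. f (c i))} = Pi I (\<lambda>_. {a. t < f a})"
    using assms by auto
  then show ?thesis
    using assms by (simp add: measure_Pi_pmf_Pi)
qed

lemma has_integral_prob_power_Min_Pi_pmf:
  assumes "finite I" "I \<noteq> {}" "finite (set_pmf q)" "\<And>a. f a \<in> {0..1}"
  shows "((\<lambda>t. measure_pmf.prob q {a. t < f a} ^ card I) has_integral
           measure_pmf.expectation (Pi_pmf I d (\<lambda>_. q)) (\<lambda>c. MIN i\<in>I. f (c i))) {0..1}"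
proof -
  have "(MIN i\<in>I. f (c i)) \<in> {0..1}" for c
  proof -
    have "(MIN i\<in>I. f (c i)) \<in> (\<lambda>i. f (c i)) ` I"
      using assms(1,2) by (intro Min_in) auto
    then show ?thesis
      using assms(4) by auto
  qed
  then have "((\<lambda>t. measure_pmf.prob (Pi_pmf I d (\<lambda>_. q)) {c. t < (MIN i\<in>I. f (c i))}) has_integral
           measure_pmf.expectation (Pi_pmf I d (\<lambda>_. q)) (\<lambda>c. MIN i\<in>I. f (c i))) {0..1}"
    using assms by (intro has_integral_prob_less_pmf) (auto simp: set_Pi_pmf)
  then show ?thesis
    unfolding prob_Pi_pmf_Min_greater[OF assms(1,2)] .
qed

lemma has_integral_expectation_prob_power:
  fixes f :: "'x \<Rightarrow> 'a \<Rightarrow> real"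
  assumes "finite I" "I \<noteq> {}" "finite (set_pmf p)" "finite (set_pmf q)" "\<And>x a. f x a \<in> {0..1}"
  shows "((\<lambda>t. measure_pmf.expectation p (\<lambda>x. measure_pmf.prob q {a. t < f x a} ^ card I)) has_integral
           measure_pmf.expectation (Pi_pmf I d (\<lambda>_. q))
             (\<lambda>c. measure_pmf.expectation p (\<lambda>x. MIN i\<in>I. f x (c i)))) {0..1}"
proof -
  have "finite (set_pmf (Pi_pmf I d (\<lambda>_. q)))"
    using assms by (auto simp: set_Pi_pmf)
  then show ?thesis
    using assms
    by (subst expectation_swap_pmf)
      (auto intro!: has_integral_expectation_pmf has_integral_prob_power_Min_Pi_pmf)
qed

lemma f_arg_min_on_eq_Min:
  fixes f :: "'a \<Rightarrow> 'b::linorder"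
  assumes "finite S" "S \<noteq> {}"
  shows "f (arg_min_on f S) = Min (f ` S)"
  using assms arg_min_if_finite(1)[OF assms] arg_min_least[OF assms]
  by (intro Min_eqI[symmetric]) auto

lemma prob_fibre_le_pmf_marg_X:
  "measure_pmf.prob P {(s, x'). x' = x \<and> C s} \<le> pmf (marg_X P) x"
proof -
  have "measure_pmf.prob P {(s, x'). x' = x \<and> C s} \<le> measure_pmf.prob P (snd -` {x})"
    by (rule measure_pmf.finite_measure_mono) auto
  also have "\<dots> = pmf (marg_X P) x"
    by (simp add: marg_X_def pmf_map)
  finally show ?thesis .
qed

lemma pi_fn_nonneg: "0 \<le> pi_fn P ds dx Ds Dx x z y"
  by (simp add: pi_fn_def)

lemma pi_fn_le_1: "pi_fn P ds dx Ds Dx x z y \<le> 1"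
  using prob_fibre_le_pmf_marg_X[of P x "\<lambda>s. Ds < ds s z \<or> Dx < dx x y"]
  by (cases "pmf (marg_X P) x = 0") (auto simp: pi_fn_def divide_le_eq_1)

lemma pmf_marg_X_mult_pi_fn:
  "pmf (marg_X P) x * pi_fn P ds dx Ds Dx x z y
     = measure_pmf.prob P {(s, x'). x' = x \<and> (Ds < ds s z \<or> Dx < dx x y)}"
  using prob_fibre_le_pmf_marg_X[of P x "\<lambda>s. Ds < ds s z \<or> Dx < dx x y"]
  by (cases "pmf (marg_X P) x = 0") (auto simp: pi_fn_def intro: antisym)

lemma det_code_error_eq_expectation:
  fixes P :: "('s \<times> 'x::finite) pmf"
  shows "det_code_error P ds dx Ds Dx f g
     = measure_pmf.expectation (marg_X P) (\<lambda>x. pi_fn P ds dx Ds Dx x (fst (g (f x))) (snd (g (f x))))"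
proof -
  define E where "E = {(s, x). Ds < ds s (fst (g (f x))) \<or> Dx < dx x (snd (g (f x)))}"
  have "measure_pmf.prob P E = measure_pmf.prob P (\<Union>x. E \<inter> snd -` {x})"
    by (rule arg_cong[where f = "measure_pmf.prob P"]) auto
  also have "\<dots> = (\<Sum>x\<in>UNIV. measure_pmf.prob P (E \<inter> snd -` {x}))"
    by (rule measure_pmf.finite_measure_finite_Union) (auto simp: disjoint_family_on_def)
  also have "\<dots> = (\<Sum>x\<in>UNIV. pmf (marg_X P) x * pi_fn P ds dx Ds Dx x (fst (g (f x))) (snd (g (f x))))"
    unfolding pmf_marg_X_mult_pi_fn E_def
    by (intro sum.cong refl arg_cong[where f = "measure_pmf.prob P"]) auto
  finally show ?thesis
    unfolding det_code_error_def E_def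
    by (subst integral_measure_pmf_real[of UNIV]) (auto simp: mult.commute)
qed

lemma det_code_error_arg_min_on:
  fixes P :: "('s \<times> 'x::finite) pmf" and c :: "nat \<Rightarrow> 'zh \<times> 'yh"
  assumes "finite I" "I \<noteq> {}"
  shows "det_code_error P ds dx Ds Dx
           (\<lambda>x. arg_min_on (\<lambda>i. pi_fn P ds dx Ds Dx x (fst (c i)) (snd (c i))) I) c
       = measure_pmf.expectation (marg_X P)
           (\<lambda>x. MIN i\<in>I. pi_fn P ds dx Ds Dx x (fst (c i)) (snd (c i)))"
proof -
  have "pi_fn P ds dx Ds Dx x (fst (c (arg_min_on (\<lambda>i. pi_fn P ds dx Ds Dx x (fst (c i)) (snd (c i))) I)))
          (snd (c (arg_min_on (\<lambda>i. pi_fn P ds dx Ds Dx x (fst (c i)) (snd (c i))) I)))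
      = (MIN i\<in>I. pi_fn P ds dx Ds Dx x (fst (c i)) (snd (c i)))" for x
    using f_arg_min_on_eq_Min[OF assms, of "\<lambda>i. pi_fn P ds dx Ds Dx x (fst (c i)) (snd (c i))"]
    by (simp add: image_image)
  then show ?thesis
    by (simp add: det_code_error_eq_expectation)
qed

theorem theorem1:
  fixes P :: "('s::finite \<times> 'x::finite) pmf"
    and Q :: "('zh::finite \<times> 'yh::finite) pmf"
    and ds :: "'s \<Rightarrow> 'zh \<Rightarrow> real" and dx :: "'x \<Rightarrow> 'yh \<Rightarrow> real"
    and Ds Dx :: real and M :: nat
  assumes "\<And>s z. ds s z \<ge> 0" and "\<And>x y. dx x y \<ge> 0"
    and "Ds \<ge> 0" and "Dx \<ge> 0" and "M \<ge> 1"
  shows "\<exists>f g. is_det_code P ds dx M Ds Dx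
           (integral {0..1} (\<lambda>t. measure_pmf.expectation (marg_X P)
              (\<lambda>x. (measure_pmf.prob Q {(z, y). pi_fn P ds dx Ds Dx x z y > t}) ^ M)))
           f g"
proof -
  define \<pi> where "\<pi> x p = pi_fn P ds dx Ds Dx x (fst p) (snd p)" for x p
  define R where "R = Pi_pmf {1..M} undefined (\<lambda>_. Q)"
  define err where "err = (\<lambda>c. measure_pmf.expectation (marg_X P) (\<lambda>x. MIN m\<in>{1..M}. \<pi> x (c m)))"
  have indices: "finite {1..M}" "{1..M} \<noteq> {}"
    using \<open>M \<ge> 1\<close> by auto
  have "((\<lambda>t. measure_pmf.expectation (marg_X P) (\<lambda>x. measure_pmf.prob Q {p. t < \<pi> x p} ^ M))
      has_integral measure_pmf.expectation R err) {0..1}"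
    using has_integral_expectation_prob_power[OF indices, of "marg_X P" Q \<pi> undefined]
    by (simp add: R_def err_def \<pi>_def pi_fn_nonneg pi_fn_le_1)
  moreover have "{(z, y). pi_fn P ds dx Ds Dx x z y > t} = {p. t < \<pi> x p}" for x t
    by (auto simp: \<pi>_def)
  ultimately have average:
    "integral {0..1} (\<lambda>t. measure_pmf.expectation (marg_X P)
       (\<lambda>x. (measure_pmf.prob Q {(z, y). pi_fn P ds dx Ds Dx x z y > t}) ^ M))
     = measure_pmf.expectation R err"
    by (simp add: integral_unique)
  have "finite (set_pmf R)"
    by (auto simp: R_def set_Pi_pmf)
  then obtain c where "err c \<le> measure_pmf.expectation R err"
    using ex_in_set_pmf_le_expectation by blast
  then have "is_det_code P ds dx M Ds Dx (measure_pmf.expectation R err)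
      (\<lambda>x. arg_min_on (\<lambda>m. \<pi> x (c m)) {1..M}) c"
    unfolding is_det_code_def \<pi>_def det_code_error_arg_min_on[OF indices] err_def
    using arg_min_if_finite(1)[OF indices] by blast
  then show ?thesis
    unfolding average by blast
qed

end
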